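(* Let $\boldsymbol{x}\in\mathbb{R}^d$ be a random vector with distribution $p(\boldsymbol{x})$ and let $\boldsymbol{z}\sim\mathcal N(\mathbf 0,\mathbf I)$ be independent of $\boldsymbol{x}$. Let $\{S_j\}_{j=1}^k$ be a partition of the index set $\{1,\dots,d\}$, and for each $j$ let $0\le t_{\text{start}_j}<t_{\text{end}_j}$ be given such that the intervals $[t_{\text{start}_j},t_{\text{end}_j}]$ for different $j$ do not overlap. Let $\mathbf A(t)$ be the diagonal $d\times d$ matrix whose $i$-th diagonal entry, for $i\in S_j$, is $$\mathbf A(t)_{ii}=\begin{cases}1, & 0\le t\le t_{\text{start}_j},\\ \dfrac{t-t_{\text{end}_j}}{t_{\text{start}_j}-t_{\text{end}_j}}, & t_{\text{start}_j}<t\le t_{\text{end}_j},\\ 0, & t>t_{\text{end}_j},\end{cases}$$ and set $\boldsymbol{x}_t=\mathbf A(t)\boldsymbol{x}+(\mathbf I-\mathbf A(t))\boldsymbol{z}$. Let $\boldsymbol{x}_{\boldsymbol\theta^*}(\boldsymbol{x}_t,t)=\mathbb E[\boldsymbol{x}\mid \boldsymbol{x}_t]$ denote the optimal denoiser (the minimizer over functions $\boldsymbol{x}_{\boldsymbol\theta}$ of $\mathbb E\|\boldsymbol{x}-\boldsymbol{x}_{\boldsymbol\theta}(\boldsymbol{x}_t,t)\|_2^2$), viewed as a function of $\boldsymbol{x}_t$. Then for every $t$ and every group index $j$ with $t_{\text{end}_j}<t$, we have $\frac{\partial}{\partial(\boldsymbol{x}_t)_i}\boldsymbol{x}_{\boldsymbol\theta^*}(\boldsymbol{x}_t,t)=\mathbf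 0$ for all $i\in S_j$.
   Context: This is the "groupwise diffusion" forward process: each group $S_j$ of coordinates of the data is linearly interpolated to independent Gaussian noise during its own time interval $[t_{\text{start}_j},t_{\text{end}_j}]$, and remains data before and pure noise after that interval. $(\boldsymbol{x}_t)_i$ denotes the $i$-th coordinate of $\boldsymbol{x}_t$. *)

theory Defs
  imports "HOL-Probability.Probability"
begin

definition gw_coef :: "real \<Rightarrow> real \<Rightarrow> real \<Rightarrow> real" where
  "gw_coef ts te t = (if t \<le> ts then 1 else if t \<le> te then (t - te) / (ts - te) else 0)"

definition grp_of :: "(nat \<Rightarrow> 'd set) \<Rightarrow> nat \<Rightarrow> 'd \<Rightarrow> nat" where
  "grp_of S k i = (THE j. j < k \<and> i \<in> S j)"

definition gw_A :: "(nat \<Rightarrow> 'd::finite set) \<Rightarrow> nat \<Rightarrow> (nat \<Rightarrow> real) \<Rightarrow> (nat \<Rightarrow> real)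
    \<Rightarrow> real \<Rightarrow> real ^ 'd ^ 'd" where
  "gw_A S k ts te t = (\<chi> r c. if r = c then gw_coef (ts (grp_of S k r)) (te (grp_of S k r)) t else 0)"

definition gw_xt :: "(nat \<Rightarrow> 'd::finite set) \<Rightarrow> nat \<Rightarrow> (nat \<Rightarrow> real) \<Rightarrow> (nat \<Rightarrow> real)
    \<Rightarrow> real \<Rightarrow> real ^ 'd \<Rightarrow> real ^ 'd \<Rightarrow> real ^ 'd" where
  "gw_xt S k ts te t x z = gw_A S k ts te t *v x + (mat 1 - gw_A S k ts te t) *v z"

definition optimal_denoiser ::
  "'a measure \<Rightarrow> ('a \<Rightarrow> real ^ 'd::finite) \<Rightarrow> ('a \<Rightarrow> real ^ 'd) \<Rightarrow> (real ^ 'd \<Rightarrow> real ^ 'd) \<Rightarrow> bool" where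
  "optimal_denoiser M X Xt f \<longleftrightarrow>
     f \<in> borel_measurable borel \<and>
     integrable M (\<lambda>\<omega>. (norm (X \<omega> - f (Xt \<omega>)))\<^sup>2) \<and>
     (\<forall>g \<in> borel_measurable borel. integrable M (\<lambda>\<omega>. (norm (X \<omega> - g (Xt \<omega>)))\<^sup>2) \<longrightarrow>
        (\<integral>\<omega>. (norm (X \<omega> - f (Xt \<omega>)))\<^sup>2 \<partial>M) \<le> (\<integral>\<omega>. (norm (X \<omega> - g (Xt \<omega>)))\<^sup>2 \<partial>M))"

end

theory Submission
  imports Defs
begin

(* Once t > te j, the coordinates of x_t in S j are exactly the noise coordinates z_(S j), which
   are independent of the data x and of the other noise coordinates, i.e. of everything else
   x_t is built from. Take any optimal denoiser h (it exists: componentwise, the conditional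
   expectation is the least-squares regression of x on x_t) and average it over this noise,
   f w = E[h (w with its S j coordinates replaced by z_(S j))]. For fixed values of the other
   sources, Jensen's inequality compares the errors of f and h; integrating with Fubini over
   the product law of the independent sources shows that f is at least as good as h, hence
   optimal. By construction f ignores the S j coordinates of its argument, so its partial
   derivatives in these coordinates vanish. *)

section \<open>Least squares regression\<close>

lemma integrable_mult_of_square_integrable:
  fixes f g :: "'a \<Rightarrow> real"
  assumes [measurable]: "f \<in> borel_measurable M" "g \<in> borel_measurable M"
    and "integrable M (\<lambda>x. (f x)\<^sup>2)" "integrable M (\<lambda>x. (g x)\<^sup>2)"
  shows "integrable M (\<lambda>x. f x * g x)"
proof (rule Bochner_Integration.integrable_bound)
  show "integrable M (\<lambda>x. (f x)\<^sup>2 + (g x)\<^sup>2)"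
    using assms by simp
  have "\<bar>a * b\<bar> \<le> a\<^sup>2 + b\<^sup>2" for a b :: real
    using sum_squares_bound[of "\<bar>a\<bar>" "\<bar>b\<bar>"] mult_nonneg_nonneg[of "\<bar>a\<bar>" "\<bar>b\<bar>"]
    unfolding abs_mult power2_abs by linarith
  then show "AE x in M. norm (f x * g x) \<le> norm ((f x)\<^sup>2 + (g x)\<^sup>2)"
    by simp
qed simp

lemma integrable_square_diff:
  fixes f g :: "'a \<Rightarrow> real"
  assumes "f \<in> borel_measurable M" "g \<in> borel_measurable M"
    and "integrable M (\<lambda>x. (f x)\<^sup>2)" "integrable M (\<lambda>x. (g x)\<^sup>2)"
  shows "integrable M (\<lambda>x. (f x - g x)\<^sup>2)"
  using assms integrable_mult_of_square_integrable[OF assms]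
  by (simp add: power2_diff mult.assoc)

lemma real_cond_exp_least_squares:
  fixes Y G :: "'a \<Rightarrow> real"
  assumes "prob_space M" "subalgebra M F"
    and [measurable]: "Y \<in> borel_measurable M" "G \<in> borel_measurable F"
    and Y2: "integrable M (\<lambda>x. (Y x)\<^sup>2)" and YG: "integrable M (\<lambda>x. (Y x - G x)\<^sup>2)"
  shows "integrable M (\<lambda>x. (Y x - real_cond_exp M F Y x)\<^sup>2)"
    and "(\<integral>x. (Y x - real_cond_exp M F Y x)\<^sup>2 \<partial>M) \<le> (\<integral>x. (Y x - G x)\<^sup>2 \<partial>M)"
proof -
  interpret prob_space M by fact
  interpret finite_measure_subalgebra M F
    by unfold_locales fact
  define m where "m = real_cond_exp M F Y"
  have [measurable]: "m \<in> borel_measurable F" "m \<in> borel_measurable M" "G \<in> borel_measurable M"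
    using measurable_from_subalg[OF subalg \<open>G \<in> borel_measurable F\<close>] by (auto simp: m_def)
  have m2: "integrable M (\<lambda>x. (m x)\<^sup>2)"
    unfolding m_def
    by (rule integrable_convex_cond_exp[where I=UNIV])
       (auto simp: Y2 convex_power2 square_integrable_imp_integrable)
  have G2: "integrable M (\<lambda>x. (G x)\<^sup>2)"
    using integrable_square_diff[of Y M "\<lambda>x. Y x - G x"] Y2 YG by simp
  have Ym2: "integrable M (\<lambda>x. (Y x - m x)\<^sup>2)" and mG2: "integrable M (\<lambda>x. (m x - G x)\<^sup>2)"
    using Y2 m2 G2 by (auto intro: integrable_square_diff)
  have mG_Y: "integrable M (\<lambda>x. (m x - G x) * Y x)"
    using mG2 Y2 by (intro integrable_mult_of_square_integrable) auto
  have mG_m: "integrable M (\<lambda>x. (m x - G x) * m x)"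
    using mG2 m2 by (intro integrable_mult_of_square_integrable) auto
  have "(\<integral>x. (m x - G x) * m x \<partial>M) = (\<integral>x. (m x - G x) * Y x \<partial>M)"
    using mG_Y unfolding m_def by (intro real_cond_exp_intg(2)) (auto simp: m_def)
  then have "(\<integral>x. (m x - G x) * (Y x - m x) \<partial>M) = 0"
    using mG_Y mG_m by (simp add: right_diff_distrib)
  moreover have "integrable M (\<lambda>x. (m x - G x) * (Y x - m x))"
    using mG_Y mG_m by (simp add: right_diff_distrib)
  moreover have "(\<lambda>x. (Y x - G x)\<^sup>2) =
      (\<lambda>x. (Y x - m x)\<^sup>2 + (m x - G x)\<^sup>2 + 2 * ((m x - G x) * (Y x - m x)))"
    by (simp add: fun_eq_iff power2_eq_square algebra_simps)
  ultimately have "(\<integral>x. (Y x - G x)\<^sup>2 \<partial>M) = (\<integral>x. (Y x - m x)\<^sup>2 \<partial>M) + (\<integral>x. (m x - G x)\<^sup>2 \<partial>M)"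
    using Ym2 mG2 by simp
  then show "(\<integral>x. (Y x - real_cond_exp M F Y x)\<^sup>2 \<partial>M) \<le> (\<integral>x. (Y x - G x)\<^sup>2 \<partial>M)"
    by (simp add: m_def)
  show "integrable M (\<lambda>x. (Y x - real_cond_exp M F Y x)\<^sup>2)"
    using Ym2 by (simp add: m_def)
qed

lemma vimage_algebra_measurable_factor:
  fixes g :: "'a \<Rightarrow> 'c::t1_space"
  assumes g: "g \<in> borel_measurable (vimage_algebra X f M)" and f: "f \<in> X \<rightarrow> space M"
    and "x \<in> X" "y \<in> X" "f x = f y"
  shows "g x = g y"
proof -
  have "g -` {g x} \<inter> X \<in> sets (vimage_algebra X f M)"
    using measurable_sets[OF g, of "{g x}"] by simp
  then obtain A where "g -` {g x} \<inter> X = f -` A \<inter> X"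
    unfolding sets_vimage_algebra2[OF f] by blast
  then have "g z = g x \<longleftrightarrow> f z \<in> A" if "z \<in> X" for z
    using that by blast
  with assms(3-5) show ?thesis
    by metis
qed

lemma least_squares_regression_on_pair_space:
  fixes N :: "('b \<times> real) measure"
  assumes "prob_space N" and sets_N [measurable_cong]: "sets N = sets (SW \<Otimes>\<^sub>M borel)"
    and Y2: "integrable N (\<lambda>p. (snd p)\<^sup>2)"
  obtains \<phi> where "\<phi> \<in> borel_measurable SW"
    "\<And>g. g \<in> borel_measurable SW \<Longrightarrow> integrable N (\<lambda>p. (snd p - g (fst p))\<^sup>2) \<Longrightarrow>
       integrable N (\<lambda>p. (snd p - \<phi> (fst p))\<^sup>2) \<and>
       (\<integral>p. (snd p - \<phi> (fst p))\<^sup>2 \<partial>N) \<le> (\<integral>p. (snd p - g (fst p))\<^sup>2 \<partial>N)"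
proof
  define F where "F = vimage_algebra (space N) fst SW"
  have fst_F: "fst \<in> space N \<rightarrow> space SW"
    using sets_eq_imp_space_eq[OF sets_N] by (auto simp: space_pair_measure)
  have "subalgebra N F"
    unfolding subalgebra_def F_def sets_vimage_algebra2[OF fst_F]
    using measurable_sets[OF measurable_fst] by (auto simp: sets_N sets_eq_imp_space_eq[OF sets_N])
  \<comment> \<open>F-measurable functions only depend on the first component, so the conditional
    expectation of snd is a function of fst.\<close>
  define \<psi> where "\<psi> = real_cond_exp N F snd"
  define \<phi> where "\<phi> w = \<psi> (w, 0)" for w
  have \<psi>_F: "\<psi> \<in> borel_measurable F"
    unfolding \<psi>_def by simp
  then have [measurable]: "\<psi> \<in> borel_measurable N"
    by (rule measurable_from_subalg[OF \<open>subalgebra N F\<close>])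
  have \<psi>_\<phi>: "\<psi> p = \<phi> (fst p)" if "p \<in> space N" for p
    using that sets_eq_imp_space_eq[OF sets_N]
      vimage_algebra_measurable_factor[OF \<psi>_F[unfolded F_def] fst_F, of p "(fst p, 0)"]
    by (auto simp: \<phi>_def space_pair_measure)
  show [measurable]: "\<phi> \<in> borel_measurable SW"
    unfolding \<phi>_def by measurable
  fix g assume [measurable]: "g \<in> borel_measurable SW"
    and g2: "integrable N (\<lambda>p. (snd p - g (fst p))\<^sup>2)"
  have g_F: "(\<lambda>p. g (fst p)) \<in> borel_measurable F"
    unfolding F_def by (intro measurable_compose[OF measurable_vimage_algebra1[OF fst_F]]) fact
  have "snd \<in> borel_measurable N"
    by measurable
  note least_squares = real_cond_exp_least_squares[OF \<open>prob_space N\<close> \<open>subalgebra N F\<close>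
      this g_F Y2 g2, folded \<psi>_def]
  have \<psi>_eq: "(snd p - \<psi> p)\<^sup>2 = (snd p - \<phi> (fst p))\<^sup>2" if "p \<in> space N" for p
    using that by (simp add: \<psi>_\<phi>)
  have "integrable N (\<lambda>p. (snd p - \<phi> (fst p))\<^sup>2)"
    using least_squares(1) \<psi>_eq by (subst Bochner_Integration.integrable_cong[OF refl]) auto
  moreover have "(\<integral>p. (snd p - \<phi> (fst p))\<^sup>2 \<partial>N) \<le> (\<integral>p. (snd p - g (fst p))\<^sup>2 \<partial>N)"
    using least_squares(2) \<psi>_eq by (subst (asm) Bochner_Integration.integral_cong[OF refl]) auto
  ultimately show "integrable N (\<lambda>p. (snd p - \<phi> (fst p))\<^sup>2) \<and>
      (\<integral>p. (snd p - \<phi> (fst p))\<^sup>2 \<partial>N) \<le> (\<integral>p. (snd p - g (fst p))\<^sup>2 \<partial>N)" ..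
qed

lemma least_squares_regression_exists:
  fixes Y :: "'a \<Rightarrow> real"
  assumes "prob_space M" and [measurable]: "Y \<in> borel_measurable M" "W \<in> M \<rightarrow>\<^sub>M SW"
    and Y2: "integrable M (\<lambda>\<omega>. (Y \<omega>)\<^sup>2)"
  obtains \<phi> where "\<phi> \<in> borel_measurable SW" "integrable M (\<lambda>\<omega>. (Y \<omega> - \<phi> (W \<omega>))\<^sup>2)"
    "\<And>g. g \<in> borel_measurable SW \<Longrightarrow> integrable M (\<lambda>\<omega>. (Y \<omega> - g (W \<omega>))\<^sup>2) \<Longrightarrow>
       (\<integral>\<omega>. (Y \<omega> - \<phi> (W \<omega>))\<^sup>2 \<partial>M) \<le> (\<integral>\<omega>. (Y \<omega> - g (W \<omega>))\<^sup>2 \<partial>M)"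
proof -
  define N where "N = distr M (SW \<Otimes>\<^sub>M borel) (\<lambda>\<omega>. (W \<omega>, Y \<omega>))"
  have int_N: "integrable N (\<lambda>p. (snd p - f (fst p))\<^sup>2) \<longleftrightarrow> integrable M (\<lambda>\<omega>. (Y \<omega> - f (W \<omega>))\<^sup>2)"
    and integral_N: "(\<integral>p. (snd p - f (fst p))\<^sup>2 \<partial>N) = (\<integral>\<omega>. (Y \<omega> - f (W \<omega>))\<^sup>2 \<partial>M)"
    if [measurable]: "f \<in> borel_measurable SW" for f
    unfolding N_def by (simp_all add: integrable_distr_eq integral_distr)
  have "prob_space N"
    unfolding N_def by (intro prob_space.prob_space_distr assms) measurable
  moreover have "sets N = sets (SW \<Otimes>\<^sub>M borel)"
    by (simp add: N_def)
  moreover have Y2_N: "integrable N (\<lambda>p. (snd p)\<^sup>2)"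
    using Y2 int_N[of "\<lambda>_. 0"] by simp
  ultimately obtain \<phi> where [measurable]: "\<phi> \<in> borel_measurable SW" and \<phi>:
    "\<And>g. g \<in> borel_measurable SW \<Longrightarrow> integrable N (\<lambda>p. (snd p - g (fst p))\<^sup>2) \<Longrightarrow>
       integrable N (\<lambda>p. (snd p - \<phi> (fst p))\<^sup>2) \<and>
       (\<integral>p. (snd p - \<phi> (fst p))\<^sup>2 \<partial>N) \<le> (\<integral>p. (snd p - g (fst p))\<^sup>2 \<partial>N)"
    using least_squares_regression_on_pair_space by blast
  show ?thesis
  proof (rule that)
    show "integrable M (\<lambda>\<omega>. (Y \<omega> - \<phi> (W \<omega>))\<^sup>2)"
      using \<phi>[of "\<lambda>_. 0"] Y2_N int_N by simp
  qed (use \<phi> int_N integral_N in auto)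
qed

section \<open>Random vectors\<close>

lemma borel_measurable_vec_nth [measurable]:
  fixes f :: "'a \<Rightarrow> real ^ 'd::finite"
  shows "f \<in> borel_measurable M \<Longrightarrow> (\<lambda>x. f x $ c) \<in> borel_measurable M"
  by (erule measurable_compose) (intro borel_measurable_continuous_onI continuous_intros)

lemma borel_measurable_vec_lambda:
  fixes g :: "'d::finite \<Rightarrow> 'a \<Rightarrow> real"
  assumes "\<And>c. g c \<in> borel_measurable M"
  shows "(\<lambda>x. \<chi> c. g c x) \<in> borel_measurable M"
proof (subst borel_measurable_euclidean_space, intro ballI)
  fix b :: "real ^ 'd" assume "b \<in> Basis"
  then obtain c where "b = axis c 1" by (auto simp: Basis_vec_def)
  then show "(\<lambda>x. (\<chi> c. g c x) \<bullet> b) \<in> borel_measurable M"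
    using assms[of c] by (simp add: inner_axis)
qed

lemma power2_norm_vec: "(norm (v :: real ^ 'd::finite))\<^sup>2 = (\<Sum>c\<in>UNIV. (v $ c)\<^sup>2)"
  unfolding norm_vec_def L2_set_def by (simp add: sum_nonneg)

lemma power2_vec_nth_le_power2_norm: "(v $ c)\<^sup>2 \<le> (norm (v :: real ^ 'd::finite))\<^sup>2"
  using component_le_norm_cart[of v c] abs_le_square_iff[of "v $ c" "norm v"] by simp

lemma integrable_power2_norm_vec_iff:
  fixes U :: "'a \<Rightarrow> real ^ 'd::finite"
  assumes [measurable]: "U \<in> borel_measurable M"
  shows "integrable M (\<lambda>x. (norm (U x))\<^sup>2) \<longleftrightarrow> (\<forall>c. integrable M (\<lambda>x. (U x $ c)\<^sup>2))"
proof
  assume "integrable M (\<lambda>x. (norm (U x))\<^sup>2)"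
  then show "\<forall>c. integrable M (\<lambda>x. (U x $ c)\<^sup>2)"
    by (auto intro: Bochner_Integration.integrable_bound simp: power2_vec_nth_le_power2_norm)
qed (simp add: power2_norm_vec)

lemma integral_power2_norm_vec:
  fixes U :: "'a \<Rightarrow> real ^ 'd::finite"
  assumes "U \<in> borel_measurable M" "integrable M (\<lambda>x. (norm (U x))\<^sup>2)"
  shows "(\<integral>x. (norm (U x))\<^sup>2 \<partial>M) = (\<Sum>c\<in>UNIV. \<integral>x. (U x $ c)\<^sup>2 \<partial>M)"
proof -
  have "integrable M (\<lambda>x. (U x $ c)\<^sup>2)" for c
    using assms integrable_power2_norm_vec_iff by blast
  then show ?thesis
    unfolding power2_norm_vec by (rule Bochner_Integration.integral_sum)
qed

lemma (in prob_space) square_integral_le_integral_square: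
  fixes u :: "'a \<Rightarrow> real"
  assumes "integrable M u" "integrable M (\<lambda>x. (u x)\<^sup>2)"
  shows "(\<integral>x. u x \<partial>M)\<^sup>2 \<le> (\<integral>x. (u x)\<^sup>2 \<partial>M)"
  using variance_eq[OF assms] variance_positive[of u] by simp

lemma (in prob_space) power2_norm_diff_expectation_le:
  fixes U :: "'a \<Rightarrow> real ^ 'd::finite"
  assumes [measurable]: "U \<in> borel_measurable M"
  shows "ennreal ((norm (x - (\<chi> c. expectation (\<lambda>\<omega>. U \<omega> $ c))))\<^sup>2) \<le> (\<integral>\<^sup>+\<omega>. (norm (x - U \<omega>))\<^sup>2 \<partial>M)"
proof (cases "integrable M (\<lambda>\<omega>. (norm (x - U \<omega>))\<^sup>2)")
  case False
  have "(\<integral>\<^sup>+\<omega>. (norm (x - U \<omega>))\<^sup>2 \<partial>M) = \<infinity>"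
  proof (rule ccontr)
    assume "(\<integral>\<^sup>+\<omega>. (norm (x - U \<omega>))\<^sup>2 \<partial>M) \<noteq> \<infinity>"
    then have "integrable M (\<lambda>\<omega>. (norm (x - U \<omega>))\<^sup>2)"
      by (intro integrableI_nonneg) (simp_all add: less_top)
    with False show False ..
  qed
  then show ?thesis by simp
next
  case True
  have "(\<lambda>\<omega>. x - U \<omega>) \<in> borel_measurable M"
    by measurable
  with True have "integrable M (\<lambda>\<omega>. ((x - U \<omega>) $ c)\<^sup>2)" for c
    using integrable_power2_norm_vec_iff by blast
  then have sq: "integrable M (\<lambda>\<omega>. (x $ c - U \<omega> $ c)\<^sup>2)" for c
    by simp
  then have int: "integrable M (\<lambda>\<omega>. x $ c - U \<omega> $ c)" for c
    by (rule square_integrable_imp_integrable[rotated]) measurable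
  then have "integrable M (\<lambda>\<omega>. U \<omega> $ c)" for c
    using Bochner_Integration.integrable_diff[OF integrable_const[of "x $ c"] int[of c]] by simp
  then have "(norm (x - (\<chi> c. expectation (\<lambda>\<omega>. U \<omega> $ c))))\<^sup>2
      = (\<Sum>c\<in>UNIV. (expectation (\<lambda>\<omega>. x $ c - U \<omega> $ c))\<^sup>2)"
    by (simp add: power2_norm_vec prob_space)
  also have "\<dots> \<le> (\<Sum>c\<in>UNIV. expectation (\<lambda>\<omega>. (x $ c - U \<omega> $ c)\<^sup>2))"
    by (intro sum_mono square_integral_le_integral_square int sq)
  also have "\<dots> = expectation (\<lambda>\<omega>. (norm (x - U \<omega>))\<^sup>2)"
    using True by (simp add: integral_power2_norm_vec)
  also have "ennreal \<dots> = (\<integral>\<^sup>+\<omega>. (norm (x - U \<omega>))\<^sup>2 \<partial>M)"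
    using True by (simp add: nn_integral_eq_integral)
  finally show ?thesis
    by (simp add: ennreal_leI)
qed

lemma optimal_denoiserI_coordinatewise:
  fixes X W :: "'a \<Rightarrow> real ^ 'd::finite"
  assumes [measurable]: "X \<in> borel_measurable M" "W \<in> borel_measurable M" "h \<in> borel_measurable borel"
    and h2: "\<And>c. integrable M (\<lambda>\<omega>. (X \<omega> $ c - h (W \<omega>) $ c)\<^sup>2)"
    and h_least: "\<And>c g. g \<in> borel_measurable borel \<Longrightarrow> integrable M (\<lambda>\<omega>. (X \<omega> $ c - g (W \<omega>))\<^sup>2) \<Longrightarrow>
      (\<integral>\<omega>. (X \<omega> $ c - h (W \<omega>) $ c)\<^sup>2 \<partial>M) \<le> (\<integral>\<omega>. (X \<omega> $ c - g (W \<omega>))\<^sup>2 \<partial>M)"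
  shows "optimal_denoiser M X W h"
proof -
  have h_meas: "(\<lambda>\<omega>. X \<omega> - h (W \<omega>)) \<in> borel_measurable M"
    by measurable
  then have h_int: "integrable M (\<lambda>\<omega>. (norm (X \<omega> - h (W \<omega>)))\<^sup>2)"
    using h2 by (simp add: integrable_power2_norm_vec_iff)
  have "(\<integral>\<omega>. (norm (X \<omega> - h (W \<omega>)))\<^sup>2 \<partial>M) \<le> (\<integral>\<omega>. (norm (X \<omega> - g (W \<omega>)))\<^sup>2 \<partial>M)"
    if [measurable]: "g \<in> borel_measurable borel" and g_int: "integrable M (\<lambda>\<omega>. (norm (X \<omega> - g (W \<omega>)))\<^sup>2)" for g
  proof -
    have g_meas: "(\<lambda>\<omega>. X \<omega> - g (W \<omega>)) \<in> borel_measurable M"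
      by measurable
    have "\<forall>c. integrable M (\<lambda>\<omega>. ((X \<omega> - g (W \<omega>)) $ c)\<^sup>2)"
      using g_int integrable_power2_norm_vec_iff[OF g_meas] by blast
    then have "(\<integral>\<omega>. ((X \<omega> - h (W \<omega>)) $ c)\<^sup>2 \<partial>M) \<le> (\<integral>\<omega>. ((X \<omega> - g (W \<omega>)) $ c)\<^sup>2 \<partial>M)" for c
      using h_least[of "\<lambda>w. g w $ c" c] by simp
    then have "(\<Sum>c\<in>UNIV. \<integral>\<omega>. ((X \<omega> - h (W \<omega>)) $ c)\<^sup>2 \<partial>M) \<le> (\<Sum>c\<in>UNIV. \<integral>\<omega>. ((X \<omega> - g (W \<omega>)) $ c)\<^sup>2 \<partial>M)"
      by (rule sum_mono)
    then show ?thesis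
      by (simp only: integral_power2_norm_vec[OF h_meas h_int] integral_power2_norm_vec[OF g_meas g_int])
  qed
  with h_int show ?thesis
    unfolding optimal_denoiser_def by auto
qed

lemma optimal_denoiser_exists:
  fixes X W :: "'a \<Rightarrow> real ^ 'd::finite"
  assumes "prob_space M" and [measurable]: "X \<in> borel_measurable M" "W \<in> borel_measurable M"
    and X2: "integrable M (\<lambda>\<omega>. (norm (X \<omega>))\<^sup>2)"
  shows "\<exists>h. optimal_denoiser M X W h"
proof -
  have "\<forall>c. \<exists>\<phi>. \<phi> \<in> borel_measurable borel \<and> integrable M (\<lambda>\<omega>. (X \<omega> $ c - \<phi> (W \<omega>))\<^sup>2) \<and>
      (\<forall>g \<in> borel_measurable borel. integrable M (\<lambda>\<omega>. (X \<omega> $ c - g (W \<omega>))\<^sup>2) \<longrightarrow>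
         (\<integral>\<omega>. (X \<omega> $ c - \<phi> (W \<omega>))\<^sup>2 \<partial>M) \<le> (\<integral>\<omega>. (X \<omega> $ c - g (W \<omega>))\<^sup>2 \<partial>M))"
    (is "\<forall>c. \<exists>\<phi>. ?regression c \<phi>")
  proof
    fix c
    have Xc: "(\<lambda>\<omega>. X \<omega> $ c) \<in> borel_measurable M"
      by measurable
    have "integrable M (\<lambda>\<omega>. (X \<omega> $ c)\<^sup>2)"
      using X2 integrable_power2_norm_vec_iff[of X M] by simp
    then obtain \<psi> where "?regression c \<psi>"
      by (rule least_squares_regression_exists[OF assms(1) Xc assms(3)]) blast
    then show "\<exists>\<phi>. ?regression c \<phi>"
      by blast
  qed
  from choice[OF this] obtain \<phi> where \<phi>: "\<forall>c. ?regression c (\<phi> c)" ..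
  have "optimal_denoiser M X W (\<lambda>w. \<chi> c. \<phi> c w)"
    using \<phi> by (intro optimal_denoiserI_coordinatewise borel_measurable_vec_lambda) auto
  then show ?thesis
    by blast
qed

definition vec_override :: "'d set \<Rightarrow> 'a ^ 'd \<Rightarrow> 'a ^ 'd \<Rightarrow> 'a ^ 'd" where
  "vec_override B y z = (\<chi> i. if i \<in> B then z $ i else y $ i)"

lemma vec_override_nth [simp]: "vec_override B y z $ i = (if i \<in> B then z $ i else y $ i)"
  by (simp add: vec_override_def)

lemma vec_override_override [simp]: "vec_override B (vec_override B y z) z' = vec_override B y z'"
  by (simp add: vec_eq_iff)

lemma borel_measurable_vec_override [measurable]:
  fixes f g :: "'a \<Rightarrow> real ^ 'd::finite"
  assumes [measurable]: "f \<in> borel_measurable M" "g \<in> borel_measurable M"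
  shows "(\<lambda>x. vec_override B (f x) (g x)) \<in> borel_measurable M"
  unfolding vec_override_def by (intro borel_measurable_vec_lambda) measurable

section \<open>Independence\<close>

lemma sigma_sets_vimage_Pair:
  assumes "U \<in> M \<rightarrow>\<^sub>M S" "W \<in> M \<rightarrow>\<^sub>M T"
  shows "sigma_sets (space M) {(\<lambda>\<omega>. (U \<omega>, W \<omega>)) -` K \<inter> space M | K. K \<in> sets (S \<Otimes>\<^sub>M T)}
    = sigma_sets (space M) {(\<lambda>\<omega>. (U \<omega>, W \<omega>)) -` (E \<times> F) \<inter> space M | E F. E \<in> sets S \<and> F \<in> sets T}"
proof -
  have "{(\<lambda>\<omega>. (U \<omega>, W \<omega>)) -` K \<inter> space M | K. K \<in> sets (S \<Otimes>\<^sub>M T)}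
      = sigma_sets (space M) {(\<lambda>\<omega>. (U \<omega>, W \<omega>)) -` K \<inter> space M | K. K \<in> {E \<times> F | E F. E \<in> sets S \<and> F \<in> sets T}}"
    unfolding sets_pair_measure
    by (rule sigma_sets_vimage_commute) (use assms in \<open>auto simp: measurable_def space_pair_measure\<close>)
  also have "{(\<lambda>\<omega>. (U \<omega>, W \<omega>)) -` K \<inter> space M | K. K \<in> {E \<times> F | E F. E \<in> sets S \<and> F \<in> sets T}}
      = {(\<lambda>\<omega>. (U \<omega>, W \<omega>)) -` (E \<times> F) \<inter> space M | E F. E \<in> sets S \<and> F \<in> sets T}"
    by blast
  finally have eq: "{(\<lambda>\<omega>. (U \<omega>, W \<omega>)) -` K \<inter> space M | K. K \<in> sets (S \<Otimes>\<^sub>M T)}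
      = sigma_sets (space M) {(\<lambda>\<omega>. (U \<omega>, W \<omega>)) -` (E \<times> F) \<inter> space M | E F. E \<in> sets S \<and> F \<in> sets T}" .
  show ?thesis
    unfolding eq by (rule sigma_sets_sigma_sets_eq) auto
qed

lemma Int_stable_vimage_Times:
  "Int_stable {(\<lambda>\<omega>. (U \<omega>, W \<omega>)) -` (E \<times> F) \<inter> \<Omega> | E F. E \<in> sets S \<and> F \<in> sets T}"
  unfolding Int_stable_def
proof (intro ballI)
  fix a b assume "a \<in> {(\<lambda>\<omega>. (U \<omega>, W \<omega>)) -` (E \<times> F) \<inter> \<Omega> | E F. E \<in> sets S \<and> F \<in> sets T}"
    "b \<in> {(\<lambda>\<omega>. (U \<omega>, W \<omega>)) -` (E \<times> F) \<inter> \<Omega> | E F. E \<in> sets S \<and> F \<in> sets T}"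
  then obtain E F E' F' where "E \<in> sets S" "F \<in> sets T" "E' \<in> sets S" "F' \<in> sets T"
    "a = (\<lambda>\<omega>. (U \<omega>, W \<omega>)) -` (E \<times> F) \<inter> \<Omega>" "b = (\<lambda>\<omega>. (U \<omega>, W \<omega>)) -` (E' \<times> F') \<inter> \<Omega>"
    by blast
  then show "a \<inter> b \<in> {(\<lambda>\<omega>. (U \<omega>, W \<omega>)) -` (E \<times> F) \<inter> \<Omega> | E F. E \<in> sets S \<and> F \<in> sets T}"
    by (intro CollectI exI[of _ "E \<inter> E'"] exI[of _ "F \<inter> F'"]) auto
qed

(* indep_var only relates random variables of one common type, hence the pairing with a
   constant c in the next two lemmas. *)
lemma (in prob_space) prob_vimage_Times_indep_triple:
  assumes A_BC: "indep_var (S \<Otimes>\<^sub>M S) (\<lambda>\<omega>. (A \<omega>, c)) (S \<Otimes>\<^sub>M S) (\<lambda>\<omega>. (B \<omega>, C \<omega>))"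
    and B_C: "indep_var S B S C" and "c \<in> space S"
    and sets: "E \<in> sets S" "F \<in> sets S" "K \<in> sets S"
  shows "prob ((\<lambda>\<omega>. (A \<omega>, B \<omega>)) -` (E \<times> F) \<inter> C -` K \<inter> space M)
    = prob (A -` E \<inter> space M) * prob (B -` F \<inter> space M) * prob (C -` K \<inter> space M)"
proof -
  have "prob ((\<lambda>\<omega>. (A \<omega>, B \<omega>)) -` (E \<times> F) \<inter> C -` K \<inter> space M) =
      prob ((\<lambda>\<omega>. ((A \<omega>, c), (B \<omega>, C \<omega>))) -` ((E \<times> space S) \<times> (F \<times> K)) \<inter> space M)"
    using \<open>c \<in> space S\<close> by (auto intro!: arg_cong[where f=prob])
  also have "\<dots> = prob (A -` E \<inter> space M) * prob ((\<lambda>\<omega>. (B \<omega>, C \<omega>)) -` (F \<times> K) \<inter> space M)"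
    using sets \<open>c \<in> space S\<close> by (subst indep_varD[OF A_BC]) (auto intro!: arg_cong[where f=prob])
  also have "\<dots> = prob (A -` E \<inter> space M) * (prob (B -` F \<inter> space M) * prob (C -` K \<inter> space M))"
    using sets by (simp add: indep_varD[OF B_C])
  finally show ?thesis
    by (simp add: ac_simps)
qed

lemma (in prob_space) indep_var_pair_assoc:
  assumes A_BC: "indep_var (S \<Otimes>\<^sub>M S) (\<lambda>\<omega>. (A \<omega>, c)) (S \<Otimes>\<^sub>M S) (\<lambda>\<omega>. (B \<omega>, C \<omega>))"
    and B_C: "indep_var S B S C" and c: "c \<in> space S"
  shows "indep_var (S \<Otimes>\<^sub>M S) (\<lambda>\<omega>. (A \<omega>, B \<omega>)) (S \<Otimes>\<^sub>M S) (\<lambda>\<omega>. (C \<omega>, c))"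
proof -
  have [measurable]: "random_variable S B" "random_variable S C"
    using B_C by (auto dest: indep_var_rv1 indep_var_rv2)
  have [measurable]: "random_variable S A"
    using measurable_compose[OF indep_var_rv1[OF A_BC] measurable_fst] by simp
  have [measurable]: "(\<lambda>_. c) \<in> M \<rightarrow>\<^sub>M S"
    using c by simp
  define G where "G = {(\<lambda>\<omega>. (A \<omega>, B \<omega>)) -` (E \<times> F) \<inter> space M | E F. E \<in> sets S \<and> F \<in> sets S}"
  define H where "H = {(\<lambda>\<omega>. (C \<omega>, c)) -` (E \<times> F) \<inter> space M | E F. E \<in> sets S \<and> F \<in> sets S}"
  have "indep_set G H"
  proof (rule indep_setI)
    show "G \<subseteq> events" "H \<subseteq> events"
      unfolding G_def H_def by (auto intro!: measurable_sets[of _ M "S \<Otimes>\<^sub>M S"])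
  next
    fix a b assume "a \<in> G" "b \<in> H"
    then obtain E F K L where sets: "E \<in> sets S" "F \<in> sets S" "K \<in> sets S"
      and a: "a = (\<lambda>\<omega>. (A \<omega>, B \<omega>)) -` (E \<times> F) \<inter> space M"
      and b: "b = (\<lambda>\<omega>. (C \<omega>, c)) -` (K \<times> L) \<inter> space M"
      unfolding G_def H_def by blast
    show "prob (a \<inter> b) = prob a * prob b"
    proof (cases "c \<in> L")
      case True
      have "a \<inter> b = (\<lambda>\<omega>. (A \<omega>, B \<omega>)) -` (E \<times> F) \<inter> C -` K \<inter> space M"
        "b = C -` K \<inter> space M"
        "a = (\<lambda>\<omega>. (A \<omega>, B \<omega>)) -` (E \<times> F) \<inter> C -` space S \<inter> space M"
        "C -` space S \<inter> space M = space M"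
        using True measurable_space[of C M S] unfolding a b by auto
      with sets show ?thesis
        using prob_vimage_Times_indep_triple[OF A_BC B_C c sets(1,2)]
        by (simp add: prob_space)
    next
      case False
      then have "b = {}"
        unfolding b by auto
      then show ?thesis
        by simp
    qed
  qed
  then have "indep_set (sigma_sets (space M) G) (sigma_sets (space M) H)"
    unfolding G_def H_def by (intro indep_set_sigma_sets Int_stable_vimage_Times)
  then show ?thesis
    unfolding indep_var_eq G_def H_def by (simp add: sigma_sets_vimage_Pair)
qed

lemma (in prob_space) indep_var_vec_override_complement:
  fixes Z :: "'a \<Rightarrow> real ^ 'd::finite"
  assumes "indep_vars (\<lambda>_. borel) (\<lambda>i \<omega>. Z \<omega> $ i) UNIV"
  shows "indep_var borel (\<lambda>\<omega>. vec_override B (Z \<omega>) 0) borel (\<lambda>\<omega>. vec_override B 0 (Z \<omega>))"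
proof -
  define embed where "embed J g = (\<chi> i. if i \<in> J then g i else 0)" for J and g :: "'d \<Rightarrow> real"
  have embed_measurable: "embed J \<in> PiM J (\<lambda>_. borel) \<rightarrow>\<^sub>M borel" for J
    unfolding embed_def
  proof (intro borel_measurable_vec_lambda)
    fix i
    show "(\<lambda>g. if i \<in> J then g i else 0) \<in> borel_measurable (PiM J (\<lambda>_. borel))"
      by (cases "i \<in> J") (simp_all add: measurable_component_singleton)
  qed
  have "indep_var borel (embed (- B) \<circ> (\<lambda>\<omega>. restrict (\<lambda>i. Z \<omega> $ i) (- B)))
      borel (embed B \<circ> (\<lambda>\<omega>. restrict (\<lambda>i. Z \<omega> $ i) B))"
    by (intro indep_var_compose[OF indep_var_restrict[OF assms]] embed_measurable) auto
  moreover have "embed (- B) \<circ> (\<lambda>\<omega>. restrict (\<lambda>i. Z \<omega> $ i) (- B)) = (\<lambda>\<omega>. vec_override B (Z \<omega>) 0)"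
    "embed B \<circ> (\<lambda>\<omega>. restrict (\<lambda>i. Z \<omega> $ i) B) = (\<lambda>\<omega>. vec_override B 0 (Z \<omega>))"
    by (auto simp: fun_eq_iff vec_eq_iff embed_def)
  ultimately show ?thesis
    by simp
qed

lemma (in prob_space) indep_var_data_split_noise:
  fixes X Z :: "'a \<Rightarrow> real ^ 'd::finite"
  assumes XZ: "indep_var borel X borel Z" and Z: "indep_vars (\<lambda>_. borel) (\<lambda>i \<omega>. Z \<omega> $ i) UNIV"
  shows "indep_var (borel \<Otimes>\<^sub>M borel) (\<lambda>\<omega>. (X \<omega>, vec_override B (Z \<omega>) 0))
           (borel \<Otimes>\<^sub>M borel) (\<lambda>\<omega>. (vec_override B 0 (Z \<omega>), 0))"
proof (rule indep_var_pair_assoc)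
  have "indep_var (borel \<Otimes>\<^sub>M borel) ((\<lambda>x. (x, 0)) \<circ> X)
      (borel \<Otimes>\<^sub>M borel) ((\<lambda>z. (vec_override B z 0, vec_override B 0 z)) \<circ> Z)"
    by (rule indep_var_compose[OF XZ]) measurable
  then show "indep_var (borel \<Otimes>\<^sub>M borel) (\<lambda>\<omega>. (X \<omega>, 0))
      (borel \<Otimes>\<^sub>M borel) (\<lambda>\<omega>. (vec_override B (Z \<omega>) 0, vec_override B 0 (Z \<omega>)))"
    by (simp add: o_def)
qed (simp_all add: indep_var_vec_override_complement[OF Z])

lemma (in prob_space) nn_integral_indep_var:
  assumes indep: "indep_var S V T W" and [measurable]: "(\<lambda>p. f (fst p) (snd p)) \<in> borel_measurable (S \<Otimes>\<^sub>M T)"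
  shows "(\<integral>\<^sup>+\<omega>. f (V \<omega>) (W \<omega>) \<partial>M) = (\<integral>\<^sup>+\<omega>. \<integral>\<^sup>+\<omega>'. f (V \<omega>) (W \<omega>') \<partial>M \<partial>M)"
proof -
  have [measurable]: "V \<in> M \<rightarrow>\<^sub>M S" "W \<in> M \<rightarrow>\<^sub>M T"
    using indep by (auto dest: indep_var_rv1 indep_var_rv2)
  interpret law_W: prob_space "distr M T W"
    by (rule prob_space_distr) simp
  have f_V: "f (V \<omega>) \<in> borel_measurable T" if "\<omega> \<in> space M" for \<omega>
    using measurable_Pair2[OF assms(2) measurable_space[OF \<open>V \<in> M \<rightarrow>\<^sub>M S\<close> that]] by simp
  have "(\<integral>\<^sup>+\<omega>. f (V \<omega>) (W \<omega>) \<partial>M) = (\<integral>\<^sup>+p. f (fst p) (snd p) \<partial>distr M (S \<Otimes>\<^sub>M T) (\<lambda>\<omega>. (V \<omega>, W \<omega>)))"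
    by (subst nn_integral_distr) simp_all
  also have "\<dots> = (\<integral>\<^sup>+p. f (fst p) (snd p) \<partial>(distr M S V \<Otimes>\<^sub>M distr M T W))"
    using indep by (simp add: indep_var_distribution_eq)
  also have "\<dots> = (\<integral>\<^sup>+v. \<integral>\<^sup>+w. f v w \<partial>distr M T W \<partial>distr M S V)"
    by (rule law_W.nn_integral_fst[of "\<lambda>p. f (fst p) (snd p)", simplified, symmetric]) measurable
  also have "\<dots> = (\<integral>\<^sup>+\<omega>. \<integral>\<^sup>+\<omega>'. f (V \<omega>) (W \<omega>') \<partial>M \<partial>M)"
    using f_V by (subst nn_integral_distr) (auto intro!: nn_integral_cong simp: nn_integral_distr)
  finally show ?thesis .
qed

section \<open>Averaging a denoiser over independent noise\<close>

definition noise_average ::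
  "'d set \<Rightarrow> 'a measure \<Rightarrow> ('a \<Rightarrow> real ^ 'd) \<Rightarrow> (real ^ 'd \<Rightarrow> real ^ 'd) \<Rightarrow> real ^ 'd \<Rightarrow> real ^ 'd::finite"
  where "noise_average B M Q h w = (\<chi> c. \<integral>\<omega>. h (vec_override B w (Q \<omega>)) $ c \<partial>M)"

lemma noise_average_vec_override [simp]:
  "noise_average B M Q h (vec_override B w q) = noise_average B M Q h w"
  by (simp add: noise_average_def)

lemma borel_measurable_noise_average [measurable]:
  assumes "finite_measure M" and [measurable]: "Q \<in> borel_measurable M" "h \<in> borel_measurable borel"
  shows "noise_average B M Q h \<in> borel_measurable borel"
proof -
  interpret finite_measure M by fact
  show ?thesis
    unfolding noise_average_def by (intro borel_measurable_vec_lambda) measurable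
qed

lemma noise_average_has_vector_derivative_axis:
  assumes "i \<in> B"
  shows "((\<lambda>s. noise_average B M Q h (y + s *\<^sub>R axis i 1)) has_vector_derivative 0) (at 0)"
proof -
  have "vec_override B (y + s *\<^sub>R axis i 1) q = vec_override B y q" for s q
    using assms by (auto simp: vec_eq_iff axis_def)
  then have "(\<lambda>s. noise_average B M Q h (y + s *\<^sub>R axis i 1)) = (\<lambda>_. noise_average B M Q h y)"
    by (simp add: noise_average_def)
  then show ?thesis
    by (simp add: has_vector_derivative_const)
qed

lemma (in prob_space) mean_square_error_noise_average_le:
  fixes X R Q Xt :: "'a \<Rightarrow> real ^ 'd::finite" and \<phi> :: "real ^ 'd \<Rightarrow> real ^ 'd \<Rightarrow> real ^ 'd"
  assumes [measurable]: "X \<in> borel_measurable M" "h \<in> borel_measurable borel"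
      "(\<lambda>p. \<phi> (fst p) (snd p)) \<in> borel_measurable (borel \<Otimes>\<^sub>M borel)"
    and indep: "indep_var (borel \<Otimes>\<^sub>M borel) (\<lambda>\<omega>. (X \<omega>, R \<omega>)) (borel \<Otimes>\<^sub>M borel) (\<lambda>\<omega>. (Q \<omega>, 0))"
    and Xt: "\<And>\<omega>. Xt \<omega> = vec_override B (\<phi> (X \<omega>) (R \<omega>)) (Q \<omega>)"
    and h2: "integrable M (\<lambda>\<omega>. (norm (X \<omega> - h (Xt \<omega>)))\<^sup>2)"
  shows "integrable M (\<lambda>\<omega>. (norm (X \<omega> - noise_average B M Q h (Xt \<omega>)))\<^sup>2)"
    and "(\<integral>\<omega>. (norm (X \<omega> - noise_average B M Q h (Xt \<omega>)))\<^sup>2 \<partial>M) \<le> (\<integral>\<omega>. (norm (X \<omega> - h (Xt \<omega>)))\<^sup>2 \<partial>M)"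
proof -
  have XR: "(\<lambda>\<omega>. (X \<omega>, R \<omega>)) \<in> M \<rightarrow>\<^sub>M borel \<Otimes>\<^sub>M borel"
    and Q0: "(\<lambda>\<omega>. (Q \<omega>, 0)) \<in> M \<rightarrow>\<^sub>M borel \<Otimes>\<^sub>M borel"
    using indep by (auto dest: indep_var_rv1 indep_var_rv2)
  have [measurable]: "R \<in> borel_measurable M" "Q \<in> borel_measurable M"
    using measurable_compose[OF XR measurable_snd] measurable_compose[OF Q0 measurable_fst] by simp_all
  have [measurable]: "(\<lambda>\<omega>. \<phi> (X \<omega>) (R \<omega>)) \<in> borel_measurable M"
    using measurable_compose[OF XR assms(3)] by simp
  have [measurable]: "Xt \<in> borel_measurable M"
    unfolding Xt[abs_def] by measurable
  define f where "f = noise_average B M Q h"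
  have [measurable]: "f \<in> borel_measurable borel"
    unfolding f_def by measurable
  have "(\<integral>\<^sup>+\<omega>. (norm (X \<omega> - f (Xt \<omega>)))\<^sup>2 \<partial>M) = (\<integral>\<^sup>+\<omega>. (norm (X \<omega> - f (\<phi> (X \<omega>) (R \<omega>))))\<^sup>2 \<partial>M)"
    by (simp add: Xt f_def)
  also have "\<dots> \<le> (\<integral>\<^sup>+\<omega>. \<integral>\<^sup>+\<omega>'. (norm (X \<omega> - h (vec_override B (\<phi> (X \<omega>) (R \<omega>)) (Q \<omega>'))))\<^sup>2 \<partial>M \<partial>M)"
    unfolding f_def noise_average_def
    by (intro nn_integral_mono power2_norm_diff_expectation_le) measurable
  also have "\<dots> = (\<integral>\<^sup>+\<omega>. (norm (X \<omega> - h (Xt \<omega>)))\<^sup>2 \<partial>M)"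
    using nn_integral_indep_var[OF indep,
        of "\<lambda>v w. (norm (fst v - h (vec_override B (\<phi> (fst v) (snd v)) (fst w))))\<^sup>2"]
    by (simp add: Xt)
  also have "\<dots> = (\<integral>\<omega>. (norm (X \<omega> - h (Xt \<omega>)))\<^sup>2 \<partial>M)"
    using h2 by (simp add: nn_integral_eq_integral)
  finally have le: "(\<integral>\<^sup>+\<omega>. (norm (X \<omega> - f (Xt \<omega>)))\<^sup>2 \<partial>M) \<le> (\<integral>\<omega>. (norm (X \<omega> - h (Xt \<omega>)))\<^sup>2 \<partial>M)" .
  show f2: "integrable M (\<lambda>\<omega>. (norm (X \<omega> - noise_average B M Q h (Xt \<omega>)))\<^sup>2)"
    unfolding f_def[symmetric] using le by (intro integrableI_nonneg) (simp_all add: le_less_trans)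
  show "(\<integral>\<omega>. (norm (X \<omega> - noise_average B M Q h (Xt \<omega>)))\<^sup>2 \<partial>M) \<le> (\<integral>\<omega>. (norm (X \<omega> - h (Xt \<omega>)))\<^sup>2 \<partial>M)"
    using le f2 unfolding f_def[symmetric] by (simp add: nn_integral_eq_integral)
qed

lemma (in prob_space) optimal_denoiser_noise_average:
  fixes X R Q Xt :: "'a \<Rightarrow> real ^ 'd::finite" and \<phi> :: "real ^ 'd \<Rightarrow> real ^ 'd \<Rightarrow> real ^ 'd"
  assumes "X \<in> borel_measurable M" "(\<lambda>p. \<phi> (fst p) (snd p)) \<in> borel_measurable (borel \<Otimes>\<^sub>M borel)"
    and indep: "indep_var (borel \<Otimes>\<^sub>M borel) (\<lambda>\<omega>. (X \<omega>, R \<omega>)) (borel \<Otimes>\<^sub>M borel) (\<lambda>\<omega>. (Q \<omega>, 0))"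
    and "\<And>\<omega>. Xt \<omega> = vec_override B (\<phi> (X \<omega>) (R \<omega>)) (Q \<omega>)"
    and h: "optimal_denoiser M X Xt h"
  shows "optimal_denoiser M X Xt (noise_average B M Q h)"
proof -
  have "h \<in> borel_measurable borel" "integrable M (\<lambda>\<omega>. (norm (X \<omega> - h (Xt \<omega>)))\<^sup>2)"
    using h by (simp_all add: optimal_denoiser_def)
  note mse = mean_square_error_noise_average_le[OF assms(1) this(1) assms(2-4) this(2)]
  have "Q \<in> borel_measurable M"
    using measurable_compose[OF indep_var_rv2[OF indep] measurable_fst] by simp
  then have "noise_average B M Q h \<in> borel_measurable borel"
    using \<open>h \<in> borel_measurable borel\<close> by measurable
  with mse h show ?thesis
    unfolding optimal_denoiser_def by (auto intro: order_trans)
qed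

section \<open>The groupwise forward process\<close>

lemma diagonal_matrix_vector_mult_nth:
  "((\<chi> r c. if r = c then d r else 0) *v x) $ i = d i * (x :: 'a::semiring_1 ^ 'n) $ i"
  by (simp add: matrix_vector_mult_def if_distrib[of "\<lambda>a. a * _"] cong: if_cong)

lemma gw_xt_nth:
  "gw_xt S k ts te t x z $ i =
     gw_coef (ts (grp_of S k i)) (te (grp_of S k i)) t * x $ i
     + (1 - gw_coef (ts (grp_of S k i)) (te (grp_of S k i)) t) * z $ i"
proof -
  have "mat 1 - gw_A S k ts te t =
      (\<chi> r c. if r = c then 1 - gw_coef (ts (grp_of S k r)) (te (grp_of S k r)) t else 0)"
    by (simp add: vec_eq_iff mat_def gw_A_def)
  then show ?thesis
    by (simp add: gw_xt_def gw_A_def diagonal_matrix_vector_mult_nth)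
qed

lemma borel_measurable_gw_xt:
  "(\<lambda>p. gw_xt S k ts te t (fst p) (snd p)) \<in> borel_measurable (borel \<Otimes>\<^sub>M borel)"
proof -
  have eq: "(\<lambda>p. gw_xt S k ts te t (fst p) (snd p)) = (\<lambda>p. \<chi> i.
      gw_coef (ts (grp_of S k i)) (te (grp_of S k i)) t * fst p $ i
      + (1 - gw_coef (ts (grp_of S k i)) (te (grp_of S k i)) t) * snd p $ i)"
    by (simp add: fun_eq_iff vec_eq_iff gw_xt_nth)
  show ?thesis
    unfolding eq by (intro borel_measurable_vec_lambda) measurable
qed

lemma grp_of_eq:
  assumes "j < k" "i \<in> S j" and "\<And>j'. j' < k \<Longrightarrow> j \<noteq> j' \<Longrightarrow> S j \<inter> S j' = {}"
  shows "grp_of S k i = j"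
  unfolding grp_of_def using assms by (intro the_equality) auto

lemma gw_xt_expired_group:
  assumes "j < k" and disjoint: "\<And>j'. j' < k \<Longrightarrow> j \<noteq> j' \<Longrightarrow> S j \<inter> S j' = {}"
    and "ts j < te j" "te j < t"
  shows "gw_xt S k ts te t x z =
    vec_override (S j) (gw_xt S k ts te t x (vec_override (S j) z 0)) (vec_override (S j) 0 z)"
proof -
  have "gw_coef (ts j) (te j) t = 0"
    using assms(3,4) by (simp add: gw_coef_def)
  moreover have "grp_of S k i = j" if "i \<in> S j" for i
    using grp_of_eq[where S=S and k=k and j=j] \<open>j < k\<close> that disjoint by blast
  ultimately show ?thesis
    by (simp add: vec_eq_iff gw_xt_nth)
qed

theorem proposition3:
  fixes M :: "'a measure"
    and X Z :: "'a \<Rightarrow> real ^ 'd::finite"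
    and S :: "nat \<Rightarrow> 'd set" and k :: nat
    and ts te :: "nat \<Rightarrow> real"
    and t :: real and j :: nat
  assumes "prob_space M"
    and X_rv: "X \<in> borel_measurable M"
    and X_L2: "integrable M (\<lambda>\<omega>. (norm (X \<omega>))\<^sup>2)"
    and Z_rv: "Z \<in> borel_measurable M"
    and Z_gauss: "\<And>i. distributed M lborel (\<lambda>\<omega>. Z \<omega> $ i) (\<lambda>x. ennreal (std_normal_density x))"
    and Z_indep_coords: "prob_space.indep_vars M (\<lambda>_. borel) (\<lambda>i \<omega>. Z \<omega> $ i) UNIV"
    and XZ_indep: "prob_space.indep_var M borel X borel Z"
    and S_nonempty: "\<And>j. j < k \<Longrightarrow> S j \<noteq> {}"
    and S_disjoint: "\<And>j j'. j < k \<Longrightarrow> j' < k \<Longrightarrow> j \<noteq> j' \<Longrightarrow> S j \<inter> S j' = {}"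
    and S_cover: "(\<Union>j<k. S j) = UNIV"
    and ts_nonneg: "\<And>j. j < k \<Longrightarrow> 0 \<le> ts j"
    and ts_te: "\<And>j. j < k \<Longrightarrow> ts j < te j"
    and no_overlap: "\<And>j j'. j < k \<Longrightarrow> j' < k \<Longrightarrow> j \<noteq> j' \<Longrightarrow>
                        {ts j..te j} \<inter> {ts j'..te j'} = {}"
    and j_lt: "j < k"
    and te_lt_t: "te j < t"
  shows "\<exists>f. optimal_denoiser M X (\<lambda>\<omega>. gw_xt S k ts te t (X \<omega>) (Z \<omega>)) f \<and>
             (\<forall>y. \<forall>i \<in> S j. ((\<lambda>s. f (y + s *\<^sub>R axis i 1)) has_vector_derivative 0) (at 0))"
proof -
  interpret prob_space M by fact
  let ?Xt = "\<lambda>\<omega>. gw_xt S k ts te t (X \<omega>) (Z \<omega>)"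
  have "?Xt \<in> borel_measurable M"
    using measurable_compose[OF measurable_Pair[OF X_rv Z_rv] borel_measurable_gw_xt] by simp
  then obtain h where "optimal_denoiser M X ?Xt h"
    using optimal_denoiser_exists[OF \<open>prob_space M\<close> X_rv _ X_L2] by blast
  moreover have "?Xt \<omega> = vec_override (S j) (gw_xt S k ts te t (X \<omega>) (vec_override (S j) (Z \<omega>) 0))
      (vec_override (S j) 0 (Z \<omega>))" for \<omega>
    by (rule gw_xt_expired_group[where S=S and j=j and ts=ts and te=te,
          OF j_lt S_disjoint[OF j_lt] ts_te[OF j_lt] te_lt_t])
  ultimately have "optimal_denoiser M X ?Xt (noise_average (S j) M (\<lambda>\<omega>. vec_override (S j) 0 (Z \<omega>)) h)"
    by (intro optimal_denoiser_noise_average[OF X_rv borel_measurable_gw_xt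
          indep_var_data_split_noise[OF XZ_indep Z_indep_coords]])
  then show ?thesis
    using noise_average_has_vector_derivative_axis by blast
qed

end
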